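(* For any $n,m\in\mathbb{N}$ and $x_1,\dots,x_m,y_1,\dots,y_m\in\mathcal{S}$, \[\sum_{j=1}^m\|x_j\|_n\|y_j\|_n\leqslant\frac{\pi^2}{6}\Big\|\sum_{j=1}^mx_j^*x_j\Big\|_{2n+1}^{1/4}\Big\|\sum_{j=1}^mx_jx_j^*\Big\|_{2n+1}^{1/4}\Big\|\sum_{j=1}^my_j^*y_j\Big\|_{2n+1}^{1/4}\Big\|\sum_{j=1}^my_jy_j^*\Big\|_{2n+1}^{1/4}.\]
   Context: Let $\mathbb{N}=\{1,2,\dots\}$. Let $s$ be the space of complex sequences $\xi=(\xi_j)_{j\geqslant1}$ with $|\xi|_n:=(\sum_{j}|\xi_j|^2j^{2n})^{1/2}<\infty$ for all $n\in\mathbb{N}$, and let $s'$ be its dual, the space of sequences $\eta$ with $|\eta|_n':=(\sum_j|\eta_j|^2j^{-2n})^{1/2}<\infty$ for some $n$, with pairing $\langle\xi,\eta\rangle=\sum_j\xi_j\overline{\eta_j}$. The noncommutative Schwartz space $\mathcal{S}=L(s',s)$ is the space of continuous linear operators $s'\to s$ with the topology of uniform convergence on bounded sets; it is a $*$-algebra with product $xy:=x\circ\iota\circ y$ ($\iota\colon s\hookrightarrow s'$ the inclusion) and involution given by $\langle x^*\xi,\eta\rangle=\langle\xi,x\eta\rangle$. For $n\in\mathbb{N}$ and $x\in\mathcal{S}$, $\|x\|_n:=\sup\{|x\xi|_n\colon \xi\in s',\ |\xi|_n'\leqslant1\}$ (equivalently the operator norm on $\ell_2$ of $d_nxd_n$,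 where $d_n=\operatorname{diag}(1^n,2^n,3^n,\dots)$). *)

theory Defs
  imports "HOL-Analysis.Analysis"
begin

text \<open>Sequences xi = (xi_j)_{j>=1} are modelled as functions nat => complex,
  where the value at index i represents the entry xi_{i+1} (so the weight of
  index i is (i+1)).\<close>

type_synonym seq = "nat \<Rightarrow> complex"
type_synonym op = "seq \<Rightarrow> seq"


definition wpos :: "nat \<Rightarrow> seq \<Rightarrow> nat \<Rightarrow> real" where
  "wpos n \<xi> i = (cmod (\<xi> i))\<^sup>2 * (real (Suc i)) ^ (2 * n)"

definition wneg :: "nat \<Rightarrow> seq \<Rightarrow> nat \<Rightarrow> real" where
  "wneg n \<xi> i = (cmod (\<xi> i))\<^sup>2 / (real (Suc i)) ^ (2 * n)"

definition snorm :: "nat \<Rightarrow> seq \<Rightarrow> real" where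
  "snorm n \<xi> = sqrt (\<Sum>i. wpos n \<xi> i)"

definition dnorm :: "nat \<Rightarrow> seq \<Rightarrow> real" where
  "dnorm n \<xi> = sqrt (\<Sum>i. wneg n \<xi> i)"

definition s_space :: "seq set" where
  "s_space = {\<xi>. \<forall>n. summable (wpos n \<xi>)}"

definition s_dual :: "seq set" where
  "s_dual = {\<xi>. \<exists>n. summable (wneg n \<xi>)}"

definition Hneg :: "nat \<Rightarrow> seq set" where
  "Hneg k = {\<xi>. summable (wneg k \<xi>)}"

definition pairing :: "seq \<Rightarrow> seq \<Rightarrow> complex" where
  "pairing \<xi> \<eta> = (\<Sum>i. \<xi> i * cnj (\<eta> i))"

text \<open>The noncommutative Schwartz space L(s',s): linear maps s' -> s that are
  continuous for the inductive-limit topology on s' (i.e. continuous on each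
  step H_{-k} into every seminorm of s).  Operators are taken extensional
  (zero outside s') so that they are determined by their action on s'.\<close>
definition Schwartz :: "op set" where
  "Schwartz = {x.
     (\<forall>\<xi>\<in>s_dual. x \<xi> \<in> s_space) \<and>
     (\<forall>\<xi>. \<xi> \<notin> s_dual \<longrightarrow> x \<xi> = (\<lambda>_. 0)) \<and>
     (\<forall>\<xi>\<in>s_dual. \<forall>\<eta>\<in>s_dual. \<forall>a b::complex.
        x (\<lambda>i. a * \<xi> i + b * \<eta> i) = (\<lambda>i. a * x \<xi> i + b * x \<eta> i)) \<and>
     (\<forall>k n. \<exists>C. \<forall>\<xi>\<in>Hneg k. snorm n (x \<xi>) \<le> C * dnorm k \<xi>)}"

text \<open>Product xy = x o iota o y (iota the identity inclusion s into s').\<close>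
definition sprod :: "op \<Rightarrow> op \<Rightarrow> op" where
  "sprod x y = x \<circ> y"

definition adj :: "op \<Rightarrow> op" where
  "adj x = (THE y. y \<in> Schwartz \<and>
     (\<forall>\<xi>\<in>s_dual. \<forall>\<eta>\<in>s_dual. pairing (y \<xi>) \<eta> = pairing \<xi> (x \<eta>)))"

definition opsum :: "(nat \<Rightarrow> op) \<Rightarrow> nat set \<Rightarrow> op" where
  "opsum f A = (\<lambda>\<xi> i. \<Sum>j\<in>A. f j \<xi> i)"

definition opnorm :: "nat \<Rightarrow> op \<Rightarrow> real" where
  "opnorm n x = Sup {snorm n (x \<xi>) | \<xi>. \<xi> \<in> s_dual \<and> \<xi> \<in> Hneg n \<and> dnorm n \<xi> \<le> 1}"

end

theory Submission
  imports Defs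
begin

text \<open>
  Write \<open>x(a,b) = (x e_b)_a\<close> for the matrix entries of \<open>x \<in> S\<close>; they decay rapidly, and \<open>x\<close> is
  recovered from its columns by continuity. Cauchy-Schwarz along the rows bounds \<open>\<parallel>x\<parallel>_n^2\<close> by the
  weighted Hilbert-Schmidt sum \<open>H(x) = \<Sum>_{a,b} |x(a,b)|^2 (a+1)^2n (b+1)^2n\<close>, and Cauchy-Schwarz over
  \<open>j\<close> reduces the claim to \<open>\<Sum>_j H(x_j) \<le> pi^2/6 sqrt(A B)\<close>, where \<open>A\<close> and \<open>B\<close> are the
  \<open>(2n+1)\<close>-norms of \<open>\<Sum>_j x_j^* x_j\<close> and \<open>\<Sum>_j x_j x_j^*\<close>.
  Put \<open>P(a,b) = \<Sum>_j |x_j(a,b)|^2\<close>. The column sum \<open>\<Sum>_a P(a,b)\<close> is the \<open>b\<close>-th diagonal entry of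
  \<open>\<Sum>_j x_j^* x_j\<close>; testing that operator on the unit vector \<open>(b+1)^(2n+1) e_b\<close> of \<open>H_-(2n+1)\<close> gives
  \<open>\<Sum>_a P(a,b) \<le> A (b+1)^-(4n+2)\<close>, and the row sums are bounded by \<open>B\<close> in the same way.
  Splitting \<open>P(a,b) (a+1)^2n (b+1)^2n\<close> as \<open>(sqrt P(a,b) (b+1)^2n) (sqrt P(a,b) (a+1)^2n)\<close> and using
  Cauchy-Schwarz in both indices leaves \<open>\<Sum>_b (b+1)^-2 = pi^2/6\<close> under each square root.
\<close>

section \<open>Weighted sequence spaces\<close>

abbreviation weight :: "nat \<Rightarrow> real" where
  "weight i \<equiv> real (Suc i)"

definition unit_seq :: "nat \<Rightarrow> seq" where
  "unit_seq b = (\<lambda>i. if i = b then 1 else 0)"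

lemma wpos_nonneg: "0 \<le> wpos n \<xi> i"
  by (simp add: wpos_def)

lemma wneg_nonneg: "0 \<le> wneg n \<xi> i"
  by (simp add: wneg_def)

lemma wpos_eq_square: "wpos n \<xi> i = (cmod (\<xi> i) * weight i ^ n)\<^sup>2"
  by (simp add: wpos_def power_mult_distrib power_mult[symmetric] mult.commute)

lemma wneg_eq_square: "wneg n \<xi> i = (cmod (\<xi> i) / weight i ^ n)\<^sup>2"
  by (simp add: wneg_def power_divide power_mult[symmetric] mult.commute)

lemma Hneg_subset_s_dual: "Hneg k \<subseteq> s_dual"
  by (auto simp: Hneg_def s_dual_def)

lemma s_dual_HnegE:
  assumes "\<xi> \<in> s_dual"
  obtains k where "\<xi> \<in> Hneg k"
  using assms by (auto simp: Hneg_def s_dual_def)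

lemma dnorm_nonneg: "\<xi> \<in> Hneg k \<Longrightarrow> 0 \<le> dnorm k \<xi>"
  by (simp add: dnorm_def Hneg_def suminf_nonneg wneg_nonneg)

lemma snorm_nonneg: "v \<in> s_space \<Longrightarrow> 0 \<le> snorm n v"
  by (simp add: snorm_def s_space_def suminf_nonneg wpos_nonneg)

lemma Hneg_mono:
  assumes "k \<le> k'" and "\<xi> \<in> Hneg k"
  shows "\<xi> \<in> Hneg k'"
proof -
  have "wneg k' \<xi> i \<le> wneg k \<xi> i" for i
    unfolding wneg_def using assms(1) by (intro divide_left_mono power_increasing) auto
  with assms(2) show ?thesis
    unfolding Hneg_def by (auto intro: summable_comparison_test'[where N=0] simp: wneg_nonneg)
qed

lemma Hneg_scale:
  assumes "\<xi> \<in> Hneg k"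
  shows "(\<lambda>i. c * \<xi> i) \<in> Hneg k" and "dnorm k (\<lambda>i. c * \<xi> i) = cmod c * dnorm k \<xi>"
proof -
  have w: "wneg k (\<lambda>i. c * \<xi> i) = (\<lambda>i. (cmod c)\<^sup>2 * wneg k \<xi> i)"
    by (simp add: fun_eq_iff wneg_def norm_mult power_mult_distrib)
  have s: "summable (wneg k \<xi>)"
    using assms by (simp add: Hneg_def)
  show "(\<lambda>i. c * \<xi> i) \<in> Hneg k"
    using s by (simp add: Hneg_def w summable_mult)
  show "dnorm k (\<lambda>i. c * \<xi> i) = cmod c * dnorm k \<xi>"
    unfolding dnorm_def w suminf_mult[OF s] by (simp add: real_sqrt_mult)
qed

lemma unit_seq_Hneg: "unit_seq b \<in> Hneg k"
  and dnorm_unit_seq: "dnorm k (unit_seq b) = 1 / weight b ^ k"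
proof -
  have "wneg k (unit_seq b) = (\<lambda>i. if i = b then (1 / weight b ^ k)\<^sup>2 else 0)"
    by (auto simp: fun_eq_iff wneg_eq_square unit_seq_def)
  then have s: "wneg k (unit_seq b) sums (1 / weight b ^ k)\<^sup>2"
    using sums_single[of b "\<lambda>_. (1 / weight b ^ k)\<^sup>2"] by simp
  show "unit_seq b \<in> Hneg k"
    using sums_summable[OF s] by (simp add: Hneg_def)
  show "dnorm k (unit_seq b) = 1 / weight b ^ k"
    using sums_unique[OF s, symmetric] by (simp add: dnorm_def)
qed

lemma unit_seq_s_dual: "unit_seq b \<in> s_dual"
  using unit_seq_Hneg Hneg_subset_s_dual by blast

lemma s_space_Hneg:
  assumes "v \<in> s_space"
  shows "v \<in> Hneg k" and "dnorm k v \<le> snorm 0 v"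
proof -
  have le: "wneg k v i \<le> wpos 0 v i" for i
    by (simp add: wneg_def wpos_def divide_le_eq mult_le_cancel_left1)
  have s0: "summable (wpos 0 v)"
    using assms by (simp add: s_space_def)
  then have s: "summable (wneg k v)"
    by (rule summable_comparison_test'[where N=0]) (simp add: wneg_nonneg le)
  then show "v \<in> Hneg k"
    by (simp add: Hneg_def)
  show "dnorm k v \<le> snorm 0 v"
    unfolding dnorm_def snorm_def by (intro real_sqrt_le_mono suminf_le[OF le s s0])
qed

lemma s_space_subset_s_dual: "s_space \<subseteq> s_dual"
  using s_space_Hneg(1) Hneg_subset_s_dual by blast

lemma norm_coord_le_snorm:
  assumes "v \<in> s_space"
  shows "cmod (v a) * weight a ^ N \<le> snorm N v"
proof -
  have "wpos N v a \<le> suminf (wpos N v)"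
    using sum_le_suminf[of "wpos N v" "{a}"] assms by (simp add: s_space_def wpos_nonneg)
  then show ?thesis
    unfolding snorm_def wpos_eq_square by (metis real_le_rsqrt)
qed

lemma suminf_Cauchy_Schwarz:
  fixes f g :: "nat \<Rightarrow> real"
  assumes "\<And>i. 0 \<le> f i" and "\<And>i. 0 \<le> g i"
    and f: "summable (\<lambda>i. (f i)\<^sup>2)" and g: "summable (\<lambda>i. (g i)\<^sup>2)"
  shows "summable (\<lambda>i. f i * g i)"
    and "(\<Sum>i. f i * g i) \<le> sqrt (\<Sum>i. (f i)\<^sup>2) * sqrt (\<Sum>i. (g i)\<^sup>2)"
proof -
  have le: "norm (f i * g i) \<le> ((f i)\<^sup>2 + (g i)\<^sup>2) / 2" for i
    using sum_squares_bound[of "f i" "g i"] assms(1,2)[of i] by (simp add: power2_eq_square)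
  show fg: "summable (\<lambda>i. f i * g i)"
    by (rule summable_comparison_test'[OF summable_divide[OF summable_add[OF f g]] le])
  show "(\<Sum>i. f i * g i) \<le> sqrt (\<Sum>i. (f i)\<^sup>2) * sqrt (\<Sum>i. (g i)\<^sup>2)"
  proof (rule suminf_le_const[OF fg])
    fix n
    have "(\<Sum>i<n. f i * g i) \<le> sqrt (\<Sum>i<n. (f i)\<^sup>2) * sqrt (\<Sum>i<n. (g i)\<^sup>2)"
      using real_le_rsqrt[OF Cauchy_Schwarz_ineq_sum] by (simp add: real_sqrt_mult)
    also have "\<dots> \<le> sqrt (\<Sum>i. (f i)\<^sup>2) * sqrt (\<Sum>i. (g i)\<^sup>2)"
      using f g by (intro mult_mono real_sqrt_le_mono sum_le_suminf) (auto intro: suminf_nonneg sum_nonneg)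
    finally show "(\<Sum>i<n. f i * g i) \<le> sqrt (\<Sum>i. (f i)\<^sup>2) * sqrt (\<Sum>i. (g i)\<^sup>2)" .
  qed
qed

lemma norm_pairing_le:
  assumes "\<xi> \<in> Hneg k" and "v \<in> s_space"
  shows "summable (\<lambda>i. norm (\<xi> i * cnj (v i)))"
    and "cmod (pairing \<xi> v) \<le> dnorm k \<xi> * snorm k v"
proof -
  define f where "f i = cmod (\<xi> i) / weight i ^ k" for i
  define g where "g i = cmod (v i) * weight i ^ k" for i
  have f2: "(\<lambda>i. (f i)\<^sup>2) = wneg k \<xi>" and g2: "(\<lambda>i. (g i)\<^sup>2) = wpos k v"
    by (simp_all add: fun_eq_iff f_def g_def wneg_eq_square wpos_eq_square)
  have fg: "(\<lambda>i. norm (\<xi> i * cnj (v i))) = (\<lambda>i. f i * g i)"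
    by (simp add: fun_eq_iff f_def g_def norm_mult)
  have nonneg: "0 \<le> f i" "0 \<le> g i" for i
    by (simp_all add: f_def g_def)
  have "summable (\<lambda>i. (f i)\<^sup>2)" "summable (\<lambda>i. (g i)\<^sup>2)"
    using assms by (simp_all add: f2 g2 Hneg_def s_space_def)
  note CS = suminf_Cauchy_Schwarz[OF nonneg this, unfolded f2 g2 fg[symmetric], folded dnorm_def snorm_def]
  show sm: "summable (\<lambda>i. norm (\<xi> i * cnj (v i)))"
    by (rule CS(1))
  have "cmod (pairing \<xi> v) \<le> (\<Sum>i. norm (\<xi> i * cnj (v i)))"
    unfolding pairing_def by (rule summable_norm[OF sm])
  also have "\<dots> \<le> dnorm k \<xi> * snorm k v"
    by (rule CS(2))
  finally show "cmod (pairing \<xi> v) \<le> dnorm k \<xi> * snorm k v" .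
qed

lemma pairing_unit_seq_right: "pairing v (unit_seq i) = v i"
proof -
  have "(\<lambda>j. v j * cnj (unit_seq i j)) = (\<lambda>j. if j = i then v j else 0)"
    by (auto simp: fun_eq_iff unit_seq_def)
  then show ?thesis
    unfolding pairing_def using sums_unique[OF sums_single[of i v]] by simp
qed

lemma pairing_unit_seq_left: "pairing (unit_seq i) v = cnj (v i)"
proof -
  have "(\<lambda>j. unit_seq i j * cnj (v j)) = (\<lambda>j. if j = i then cnj (v j) else 0)"
    by (auto simp: fun_eq_iff unit_seq_def)
  then show ?thesis
    unfolding pairing_def using sums_unique[OF sums_single[of i "\<lambda>j. cnj (v j)"]] by simp
qed

lemma pairing_self:
  assumes "u \<in> s_space"
  shows "summable (\<lambda>i. (cmod (u i))\<^sup>2)" and "pairing u u = of_real (\<Sum>i. (cmod (u i))\<^sup>2)"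
proof -
  have "wpos 0 u = (\<lambda>i. (cmod (u i))\<^sup>2)"
    by (simp add: fun_eq_iff wpos_def)
  then show s: "summable (\<lambda>i. (cmod (u i))\<^sup>2)"
    using assms by (metis mem_Collect_eq s_space_def)
  have e: "(\<lambda>i. u i * cnj (u i)) = (\<lambda>i. of_real ((cmod (u i))\<^sup>2))"
    by (metis complex_norm_square)
  show "pairing u u = of_real (\<Sum>i. (cmod (u i))\<^sup>2)"
    unfolding pairing_def e by (rule suminf_of_real[OF s, symmetric])
qed

lemma power2_add_le: "((x::real) + y)\<^sup>2 \<le> 2 * x\<^sup>2 + 2 * y\<^sup>2"
proof -
  have "0 \<le> (x - y)\<^sup>2"
    by simp
  then show ?thesis
    by (simp add: power2_diff power2_sum)
qed

lemma s_dual_lincomb: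
  assumes "\<xi> \<in> s_dual" and "\<eta> \<in> s_dual"
  shows "(\<lambda>i. a * \<xi> i + b * \<eta> i) \<in> s_dual"
proof -
  obtain k1 k2 where "\<xi> \<in> Hneg k1" "\<eta> \<in> Hneg k2"
    using assms by (meson s_dual_HnegE)
  define K where "K = max k1 k2"
  have "\<xi> \<in> Hneg K" "\<eta> \<in> Hneg K"
    using \<open>\<xi> \<in> Hneg k1\<close> \<open>\<eta> \<in> Hneg k2\<close> Hneg_mono[of k1 K] Hneg_mono[of k2 K] by (simp_all add: K_def)
  then have s: "summable (\<lambda>i. 2 * (cmod a)\<^sup>2 * wneg K \<xi> i + 2 * (cmod b)\<^sup>2 * wneg K \<eta> i)"
    by (intro summable_add summable_mult) (simp_all add: Hneg_def)
  have le: "norm (wneg K (\<lambda>i. a * \<xi> i + b * \<eta> i) i)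
      \<le> 2 * (cmod a)\<^sup>2 * wneg K \<xi> i + 2 * (cmod b)\<^sup>2 * wneg K \<eta> i" for i
  proof -
    have "(cmod (a * \<xi> i + b * \<eta> i))\<^sup>2 \<le> (cmod a * cmod (\<xi> i) + cmod b * cmod (\<eta> i))\<^sup>2"
      using norm_triangle_ineq[of "a * \<xi> i" "b * \<eta> i"] by (intro power_mono) (auto simp: norm_mult)
    also have "\<dots> \<le> 2 * ((cmod a)\<^sup>2 * (cmod (\<xi> i))\<^sup>2) + 2 * ((cmod b)\<^sup>2 * (cmod (\<eta> i))\<^sup>2)"
      using power2_add_le by (metis power_mult_distrib)
    finally show ?thesis
      unfolding wneg_def real_norm_def abs_divide abs_power2 abs_of_nonneg[OF zero_le_power2]
      by (simp add: divide_right_mono add_divide_distrib[symmetric])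
  qed
  have "summable (wneg K (\<lambda>i. a * \<xi> i + b * \<eta> i))"
    by (rule summable_comparison_test'[OF s le])
  then show ?thesis
    unfolding s_dual_def by blast
qed

lemma pairing_lincomb_left:
  assumes "\<xi> \<in> s_dual" and "\<eta> \<in> s_dual" and "v \<in> s_space"
  shows "pairing (\<lambda>i. a * \<xi> i + b * \<eta> i) v = a * pairing \<xi> v + b * pairing \<eta> v"
proof -
  have summ: "summable (\<lambda>i. \<zeta> i * cnj (v i))" if \<zeta>: "\<zeta> \<in> s_dual" for \<zeta>
  proof -
    obtain k where k: "\<zeta> \<in> Hneg k"
      using \<zeta> by (rule s_dual_HnegE)
    show ?thesis
      by (rule summable_norm_cancel[OF norm_pairing_le(1)[OF k assms(3)]])
  qed
  have "pairing (\<lambda>i. a * \<xi> i + b * \<eta> i) v = (\<Sum>i. a * (\<xi> i * cnj (v i)) + b * (\<eta> i * cnj (v i)))"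
    unfolding pairing_def by (simp add: distrib_right mult.assoc)
  also have "\<dots> = (\<Sum>i. a * (\<xi> i * cnj (v i))) + (\<Sum>i. b * (\<eta> i * cnj (v i)))"
    using summ assms(1,2) by (intro suminf_add[symmetric] summable_mult)
  also have "\<dots> = a * pairing \<xi> v + b * pairing \<eta> v"
    unfolding pairing_def using summ assms(1,2) by (simp add: suminf_mult)
  finally show ?thesis .
qed

lemma s_space_sum:
  assumes "finite J" and "\<And>j. j \<in> J \<Longrightarrow> f j \<in> s_space"
  shows "(\<lambda>i. \<Sum>j\<in>J. f j i) \<in> s_space"
    and "(snorm n (\<lambda>i. \<Sum>j\<in>J. f j i))\<^sup>2 \<le> card J * (\<Sum>j\<in>J. (snorm n (f j))\<^sup>2)"
proof -
  have s: "summable (wpos n (f j))" if "j \<in> J" for j n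
    using assms(2)[OF that] by (simp add: s_space_def)
  have le: "wpos n (\<lambda>i. \<Sum>j\<in>J. f j i) i \<le> card J * (\<Sum>j\<in>J. wpos n (f j) i)" for n i
  proof -
    have "(cmod (\<Sum>j\<in>J. f j i))\<^sup>2 \<le> (\<Sum>j\<in>J. 1 * cmod (f j i))\<^sup>2"
      using norm_sum[of "\<lambda>j. f j i" J] by (intro power_mono) auto
    also have "\<dots> \<le> card J * (\<Sum>j\<in>J. (cmod (f j i))\<^sup>2)"
      using Cauchy_Schwarz_ineq_sum[of "\<lambda>_. 1" "\<lambda>j. cmod (f j i)" J] by simp
    finally show ?thesis
      unfolding wpos_def sum_distrib_right[symmetric] mult.assoc[symmetric] by (rule mult_right_mono) simp
  qed
  have S: "summable (\<lambda>i. card J * (\<Sum>j\<in>J. wpos n (f j) i))" for n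
    using s by (intro summable_mult summable_sum) auto
  have sn: "summable (wpos n (\<lambda>i. \<Sum>j\<in>J. f j i))" for n
    by (rule summable_comparison_test'[OF S[of n]]) (simp add: wpos_nonneg le)
  then show "(\<lambda>i. \<Sum>j\<in>J. f j i) \<in> s_space"
    by (simp add: s_space_def)
  have "suminf (wpos n (\<lambda>i. \<Sum>j\<in>J. f j i)) \<le> (\<Sum>i. card J * (\<Sum>j\<in>J. wpos n (f j) i))"
    by (rule suminf_le[OF le sn S])
  also have "\<dots> = card J * (\<Sum>j\<in>J. suminf (wpos n (f j)))"
    using s by (simp add: suminf_mult summable_sum suminf_sum)
  also have "\<dots> = card J * (\<Sum>j\<in>J. (snorm n (f j))\<^sup>2)"
    using s by (simp add: snorm_def suminf_nonneg wpos_nonneg)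
  finally show "(snorm n (\<lambda>i. \<Sum>j\<in>J. f j i))\<^sup>2 \<le> card J * (\<Sum>j\<in>J. (snorm n (f j))\<^sup>2)"
    using sn by (simp add: snorm_def suminf_nonneg wpos_nonneg)
qed

lemma snorm_sum_le:
  fixes C :: "'a \<Rightarrow> real"
  assumes J: "finite J" and f: "\<And>j. j \<in> J \<Longrightarrow> f j \<in> s_space"
    and bound: "\<And>j. j \<in> J \<Longrightarrow> snorm n (f j) \<le> C j * D" and "0 \<le> D"
  shows "snorm n (\<lambda>i. \<Sum>j\<in>J. f j i) \<le> sqrt (card J * (\<Sum>j\<in>J. (C j)\<^sup>2)) * D"
proof (rule power2_le_imp_le)
  have "(snorm n (\<lambda>i. \<Sum>j\<in>J. f j i))\<^sup>2 \<le> card J * (\<Sum>j\<in>J. (snorm n (f j))\<^sup>2)"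
    by (rule s_space_sum(2)[OF J f])
  also have "\<dots> \<le> card J * (\<Sum>j\<in>J. (C j * D)\<^sup>2)"
  proof (intro mult_left_mono sum_mono)
    fix j assume j: "j \<in> J"
    show "(snorm n (f j))\<^sup>2 \<le> (C j * D)\<^sup>2"
      by (rule power_mono[OF bound[OF j] snorm_nonneg[OF f[OF j]]])
  qed simp
  also have "\<dots> = (sqrt (card J * (\<Sum>j\<in>J. (C j)\<^sup>2)) * D)\<^sup>2"
    by (simp add: power_mult_distrib sum_distrib_right[symmetric] sum_nonneg mult.assoc)
  finally show "(snorm n (\<lambda>i. \<Sum>j\<in>J. f j i))\<^sup>2 \<le> (sqrt (card J * (\<Sum>j\<in>J. (C j)\<^sup>2)) * D)\<^sup>2" .
  show "0 \<le> sqrt (card J * (\<Sum>j\<in>J. (C j)\<^sup>2)) * D"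
    using \<open>0 \<le> D\<close> by (simp add: sum_nonneg)
qed

section \<open>Operators in the Schwartz space\<close>

lemma Schwartz_s_space: "x \<in> Schwartz \<Longrightarrow> \<xi> \<in> s_dual \<Longrightarrow> x \<xi> \<in> s_space"
  by (simp add: Schwartz_def)

lemma Schwartz_outside: "x \<in> Schwartz \<Longrightarrow> \<xi> \<notin> s_dual \<Longrightarrow> x \<xi> = (\<lambda>_. 0)"
  by (simp add: Schwartz_def)

lemma Schwartz_lincomb:
  "x \<in> Schwartz \<Longrightarrow> \<xi> \<in> s_dual \<Longrightarrow> \<eta> \<in> s_dual \<Longrightarrow>
    x (\<lambda>i. a * \<xi> i + b * \<eta> i) = (\<lambda>i. a * x \<xi> i + b * x \<eta> i)"
  by (simp add: Schwartz_def)

lemma Schwartz_scale: "x \<in> Schwartz \<Longrightarrow> \<xi> \<in> s_dual \<Longrightarrow> x (\<lambda>i. c * \<xi> i) = (\<lambda>i. c * x \<xi> i)"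
  using Schwartz_lincomb[of x \<xi> \<xi> c 0] by simp

lemma Schwartz_zero: "x \<in> Schwartz \<Longrightarrow> x (\<lambda>_. 0) = (\<lambda>_. 0)"
  using Schwartz_scale[OF _ unit_seq_s_dual, of x 0 0] by simp

lemma Schwartz_bound:
  assumes "x \<in> Schwartz"
  obtains C where "0 \<le> C" and "\<And>\<xi>. \<xi> \<in> Hneg k \<Longrightarrow> snorm n (x \<xi>) \<le> C * dnorm k \<xi>"
proof -
  have "\<exists>C. \<forall>\<xi>\<in>Hneg k. snorm n (x \<xi>) \<le> C * dnorm k \<xi>"
    using assms by (simp add: Schwartz_def)
  then obtain C where C: "\<And>\<xi>. \<xi> \<in> Hneg k \<Longrightarrow> snorm n (x \<xi>) \<le> C * dnorm k \<xi>"
    by blast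
  show thesis
  proof (rule that[of "max C 0"])
    fix \<xi> assume "\<xi> \<in> Hneg k"
    then show "snorm n (x \<xi>) \<le> max C 0 * dnorm k \<xi>"
      using C[of \<xi>] dnorm_nonneg[of \<xi> k] by (smt (verit) mult_right_mono)
  qed simp
qed

lemma Schwartz_sprod:
  assumes u: "u \<in> Schwartz" and v: "v \<in> Schwartz"
  shows "sprod u v \<in> Schwartz"
  unfolding Schwartz_def mem_Collect_eq sprod_def o_def
proof (intro conjI ballI allI impI)
  fix \<xi> :: seq
  assume "\<xi> \<in> s_dual"
  then have "v \<xi> \<in> s_dual"
    using Schwartz_s_space[OF v] s_space_subset_s_dual by blast
  then show "u (v \<xi>) \<in> s_space"
    by (rule Schwartz_s_space[OF u])
next
  fix \<xi> :: seq
  assume "\<xi> \<notin> s_dual"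
  then show "u (v \<xi>) = (\<lambda>_. 0)"
    by (simp add: Schwartz_outside[OF v] Schwartz_zero[OF u])
next
  fix \<xi> \<eta> :: seq and a b :: complex
  assume "\<xi> \<in> s_dual" "\<eta> \<in> s_dual"
  moreover from this have "v \<xi> \<in> s_dual" "v \<eta> \<in> s_dual"
    using Schwartz_s_space[OF v] s_space_subset_s_dual by blast+
  ultimately show "u (v (\<lambda>i. a * \<xi> i + b * \<eta> i)) = (\<lambda>i. a * u (v \<xi>) i + b * u (v \<eta>) i)"
    by (simp add: Schwartz_lincomb[OF v] Schwartz_lincomb[OF u])
next
  fix k n
  obtain Cu where Cu: "0 \<le> Cu" "\<And>\<zeta>. \<zeta> \<in> Hneg 0 \<Longrightarrow> snorm n (u \<zeta>) \<le> Cu * dnorm 0 \<zeta>"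
    using Schwartz_bound[OF u, where k=0 and n=n] by blast
  obtain Cv where Cv: "0 \<le> Cv" "\<And>\<xi>. \<xi> \<in> Hneg k \<Longrightarrow> snorm 0 (v \<xi>) \<le> Cv * dnorm k \<xi>"
    using Schwartz_bound[OF v, where k=k and n=0] by blast
  have "snorm n (u (v \<xi>)) \<le> (Cu * Cv) * dnorm k \<xi>" if \<xi>: "\<xi> \<in> Hneg k" for \<xi>
  proof -
    have vs: "v \<xi> \<in> s_space"
      using \<xi> Hneg_subset_s_dual Schwartz_s_space[OF v] by blast
    have "snorm n (u (v \<xi>)) \<le> Cu * dnorm 0 (v \<xi>)"
      by (rule Cu(2)[OF s_space_Hneg(1)[OF vs]])
    also have "\<dots> \<le> Cu * snorm 0 (v \<xi>)"
      by (rule mult_left_mono[OF s_space_Hneg(2)[OF vs] Cu(1)])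
    also have "\<dots> \<le> Cu * (Cv * dnorm k \<xi>)"
      by (rule mult_left_mono[OF Cv(2)[OF \<xi>] Cu(1)])
    finally show ?thesis
      by (simp add: mult.assoc)
  qed
  then show "\<exists>C. \<forall>\<xi>\<in>Hneg k. snorm n (u (v \<xi>)) \<le> C * dnorm k \<xi>"
    by blast
qed

lemma Schwartz_opsum:
  assumes J: "finite J" and f: "\<And>j. j \<in> J \<Longrightarrow> f j \<in> Schwartz"
  shows "opsum f J \<in> Schwartz"
  unfolding Schwartz_def mem_Collect_eq opsum_def
proof (intro conjI ballI allI impI)
  fix \<xi> :: seq
  assume "\<xi> \<in> s_dual"
  then show "(\<lambda>i. \<Sum>j\<in>J. f j \<xi> i) \<in> s_space"
    using J f by (intro s_space_sum(1)) (auto intro: Schwartz_s_space)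
next
  fix \<xi> :: seq
  assume "\<xi> \<notin> s_dual"
  then show "(\<lambda>i. \<Sum>j\<in>J. f j \<xi> i) = (\<lambda>_. 0)"
    using f by (simp add: Schwartz_outside)
next
  fix \<xi> \<eta> :: seq and a b :: complex
  assume "\<xi> \<in> s_dual" "\<eta> \<in> s_dual"
  then have "(\<Sum>j\<in>J. f j (\<lambda>i. a * \<xi> i + b * \<eta> i) i) = (\<Sum>j\<in>J. a * f j \<xi> i + b * f j \<eta> i)" for i
    using f by (intro sum.cong) (simp_all add: Schwartz_lincomb)
  then show "(\<lambda>i. \<Sum>j\<in>J. f j (\<lambda>i. a * \<xi> i + b * \<eta> i) i)
      = (\<lambda>i. a * (\<Sum>j\<in>J. f j \<xi> i) + b * (\<Sum>j\<in>J. f j \<eta> i))"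
    by (simp add: sum.distrib sum_distrib_left)
next
  fix k n
  have "\<forall>j\<in>J. \<exists>C. \<forall>\<xi>\<in>Hneg k. snorm n (f j \<xi>) \<le> C * dnorm k \<xi>"
    using f by (simp add: Schwartz_def)
  then obtain C where C: "\<forall>j\<in>J. \<forall>\<xi>\<in>Hneg k. snorm n (f j \<xi>) \<le> C j * dnorm k \<xi>"
    by (rule bchoice[THEN exE]) blast
  have "snorm n (\<lambda>i. \<Sum>j\<in>J. f j \<xi> i) \<le> sqrt (card J * (\<Sum>j\<in>J. (C j)\<^sup>2)) * dnorm k \<xi>"
    if \<xi>: "\<xi> \<in> Hneg k" for \<xi>
  proof (rule snorm_sum_le[OF J])
    show "f j \<xi> \<in> s_space" if "j \<in> J" for j
      using \<xi> Hneg_subset_s_dual Schwartz_s_space[OF f[OF that]] by blast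
    show "snorm n (f j \<xi>) \<le> C j * dnorm k \<xi>" if "j \<in> J" for j
      using C \<xi> that by blast
  qed (rule dnorm_nonneg[OF \<xi>])
  then show "\<exists>C. \<forall>\<xi>\<in>Hneg k. snorm n (\<lambda>i. \<Sum>j\<in>J. f j \<xi> i) \<le> C * dnorm k \<xi>"
    by blast
qed

lemma zero_Hneg: "(\<lambda>_. 0) \<in> Hneg k" and dnorm_zero: "dnorm k (\<lambda>_. 0) = 0"
proof -
  have "wneg k (\<lambda>_. 0) = (\<lambda>_. 0)"
    by (simp add: fun_eq_iff wneg_def)
  then show "(\<lambda>_. 0) \<in> Hneg k" "dnorm k (\<lambda>_. 0) = 0"
    by (simp_all add: Hneg_def dnorm_def)
qed

lemma opnorm_upper:
  assumes z: "z \<in> Schwartz" and \<xi>: "\<xi> \<in> Hneg k" and d: "dnorm k \<xi> \<le> 1"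
  shows "snorm k (z \<xi>) \<le> opnorm k z"
  unfolding opnorm_def
proof (rule cSup_upper)
  show "snorm k (z \<xi>) \<in> {snorm k (z \<xi>) |\<xi>. \<xi> \<in> s_dual \<and> \<xi> \<in> Hneg k \<and> dnorm k \<xi> \<le> 1}"
    using \<xi> d Hneg_subset_s_dual by blast
  obtain C where C: "0 \<le> C" "\<And>\<xi>. \<xi> \<in> Hneg k \<Longrightarrow> snorm k (z \<xi>) \<le> C * dnorm k \<xi>"
    using Schwartz_bound[OF z, where k=k and n=k] by blast
  show "bdd_above {snorm k (z \<xi>) |\<xi>. \<xi> \<in> s_dual \<and> \<xi> \<in> Hneg k \<and> dnorm k \<xi> \<le> 1}"
  proof (rule bdd_aboveI)
    fix y
    assume "y \<in> {snorm k (z \<xi>) |\<xi>. \<xi> \<in> s_dual \<and> \<xi> \<in> Hneg k \<and> dnorm k \<xi> \<le> 1}"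
    then obtain \<zeta> where "y = snorm k (z \<zeta>)" "\<zeta> \<in> Hneg k" "dnorm k \<zeta> \<le> 1"
      by blast
    then show "y \<le> C"
      using C(2)[of \<zeta>] mult_left_mono[of "dnorm k \<zeta>" 1 C] C(1) by simp
  qed
qed

lemma opnorm_nonneg:
  assumes "z \<in> Schwartz"
  shows "0 \<le> opnorm k z"
proof -
  have "0 \<le> snorm k (z (\<lambda>_. 0))"
    using snorm_nonneg[OF Schwartz_s_space[OF assms]] zero_Hneg Hneg_subset_s_dual by blast
  also have "\<dots> \<le> opnorm k z"
    by (rule opnorm_upper[OF assms zero_Hneg]) (simp add: dnorm_zero)
  finally show ?thesis .
qed

lemma opnorm_least:
  assumes "\<And>\<xi>. \<xi> \<in> Hneg k \<Longrightarrow> dnorm k \<xi> \<le> 1 \<Longrightarrow> snorm k (z \<xi>) \<le> M"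
  shows "opnorm k z \<le> M"
  unfolding opnorm_def
proof (rule cSup_least)
  have "(\<lambda>_. 0) \<in> s_dual"
    using zero_Hneg Hneg_subset_s_dual by blast
  then have "snorm k (z (\<lambda>_. 0)) \<in> {snorm k (z \<xi>) |\<xi>. \<xi> \<in> s_dual \<and> \<xi> \<in> Hneg k \<and> dnorm k \<xi> \<le> 1}"
    using zero_Hneg[of k] dnorm_zero[of k] by auto
  then show "{snorm k (z \<xi>) |\<xi>. \<xi> \<in> s_dual \<and> \<xi> \<in> Hneg k \<and> dnorm k \<xi> \<le> 1} \<noteq> {}"
    by blast
  fix y
  assume "y \<in> {snorm k (z \<xi>) |\<xi>. \<xi> \<in> s_dual \<and> \<xi> \<in> Hneg k \<and> dnorm k \<xi> \<le> 1}"
  then obtain \<zeta> where "y = snorm k (z \<zeta>)" "\<zeta> \<in> Hneg k" "dnorm k \<zeta> \<le> 1"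
    by blast
  then show "y \<le> M"
    using assms by simp
qed

section \<open>Rapidly decreasing double sequences\<close>

lemma inverse_weight_sq_sums: "(\<lambda>i. 1 / (weight i)\<^sup>2) sums (pi\<^sup>2 / 6)"
  using inverse_squares_sums by simp

lemma infsum_eq_suminf_dominated:
  fixes u :: "nat \<Rightarrow> 'a::banach"
  assumes "\<And>n. norm (u n) \<le> v n" and "summable v"
  shows "infsum u UNIV = suminf u"
proof -
  have sn: "summable (\<lambda>n. norm (u n))"
    using assms summable_norm_comparison_test by blast
  show ?thesis
    by (rule infsumI[OF norm_summable_imp_has_sum[OF sn summable_sums[OF summable_norm_cancel[OF sn]]]])
qed

lemma suminf_swap_dominated:
  fixes f :: "nat \<Rightarrow> nat \<Rightarrow> 'a::banach"
  assumes f: "\<And>a b. norm (f a b) \<le> g a * h b" and g: "summable g" and h: "summable h"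
    and g0: "\<And>a. 0 \<le> g a" and h0: "\<And>b. 0 \<le> h b"
  shows "(\<Sum>a. \<Sum>b. f a b) = (\<Sum>b. \<Sum>a. f a b)"
proof -
  have "(h has_sum suminf h) UNIV"
    using norm_summable_imp_has_sum[of h] h h0 by (simp add: summable_sums)
  then have inner: "((\<lambda>b. g a * h b) has_sum (g a * suminf h)) UNIV" for a
    by (rule has_sum_cmult_right)
  have outer: "(\<lambda>a. g a * suminf h) summable_on UNIV"
    using g g0 h0 by (intro norm_summable_imp_summable_on)
      (auto intro!: summable_mult2 simp: abs_mult suminf_nonneg h)
  have "(\<lambda>(a, b). g a * h b) summable_on UNIV \<times> UNIV"
    by (rule summable_on_SigmaI[where g="\<lambda>a. g a * suminf h"])
      (auto intro: inner outer g0 h0 mult_nonneg_nonneg)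
  moreover have "(\<lambda>x. norm (case x of (a, b) \<Rightarrow> g a * h b)) = (\<lambda>(a, b). g a * h b)"
    using g0 h0 by (auto simp: fun_eq_iff abs_mult)
  ultimately have "(\<lambda>x. norm (case x of (a, b) \<Rightarrow> g a * h b)) summable_on UNIV \<times> UNIV"
    by simp
  then have "(\<lambda>x. norm (case x of (a, b) \<Rightarrow> f a b)) summable_on UNIV \<times> UNIV"
    by (rule Infinite_Sum.abs_summable_on_comparison_test) (use f g0 h0 in \<open>auto simp: abs_mult\<close>)
  then have swap: "(\<Sum>\<^sub>\<infinity>a. \<Sum>\<^sub>\<infinity>b. f a b) = (\<Sum>\<^sub>\<infinity>b. \<Sum>\<^sub>\<infinity>a. f a b)"
    by (rule infsum_swap_banach[OF abs_summable_summable])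
  have rows: "(\<Sum>\<^sub>\<infinity>b. f a b) = (\<Sum>b. f a b)" for a
    by (rule infsum_eq_suminf_dominated[OF f summable_mult[OF h]])
  have cols: "(\<Sum>\<^sub>\<infinity>a. f a b) = (\<Sum>a. f a b)" for b
    by (rule infsum_eq_suminf_dominated[OF f summable_mult2[OF g]])
  have "(\<Sum>a. \<Sum>b. f a b) = (\<Sum>\<^sub>\<infinity>a. \<Sum>b. f a b)"
  proof (rule infsum_eq_suminf_dominated[OF _ summable_mult2[OF g], symmetric])
    show "norm (\<Sum>b. f a b) \<le> g a * suminf h" for a
      using norm_suminf_le[OF f summable_mult[OF h]] by (simp add: suminf_mult[OF h])
  qed
  also have "\<dots> = (\<Sum>\<^sub>\<infinity>b. \<Sum>\<^sub>\<infinity>a. f a b)"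
    by (simp only: rows[symmetric] swap)
  also have "\<dots> = (\<Sum>\<^sub>\<infinity>b. \<Sum>a. f a b)"
    by (simp only: cols)
  also have "\<dots> = (\<Sum>b. \<Sum>a. f a b)"
  proof (rule infsum_eq_suminf_dominated[OF _ summable_mult[OF h]])
    show "norm (\<Sum>a. f a b) \<le> suminf g * h b" for b
      using norm_suminf_le[OF f summable_mult2[OF g]] by (simp add: suminf_mult2[OF g])
  qed
  finally show ?thesis .
qed

definition rapid_decay :: "(nat \<Rightarrow> nat \<Rightarrow> real) \<Rightarrow> bool" where
  "rapid_decay P \<longleftrightarrow> (\<forall>i j. \<exists>C. \<forall>a b. \<bar>P a b\<bar> * weight a ^ i * weight b ^ j \<le> C)"

lemma rapid_decay_bound:
  assumes "rapid_decay P"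
  obtains C where "0 \<le> C" and "\<And>a b. \<bar>P a b\<bar> \<le> C / (weight a ^ i * weight b ^ j)"
proof -
  obtain C where C: "\<And>a b. \<bar>P a b\<bar> * weight a ^ i * weight b ^ j \<le> C"
    using assms unfolding rapid_decay_def by blast
  have "0 \<le> \<bar>P 0 0\<bar> * weight 0 ^ i * weight 0 ^ j"
    by simp
  then have "0 \<le> C"
    using C[of 0 0] by (rule order_trans)
  moreover have "\<bar>P a b\<bar> \<le> C / (weight a ^ i * weight b ^ j)" for a b
    using C[of a b] by (simp add: pos_le_divide_eq mult.assoc)
  ultimately show thesis
    using that by blast
qed

lemma rapid_decay_entries:
  assumes x: "x \<in> Schwartz"
  shows "rapid_decay (\<lambda>a b. cmod (x (unit_seq b) a))"
  unfolding rapid_decay_def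
proof (intro allI)
  fix i j
  obtain C where C: "0 \<le> C" "\<And>\<xi>. \<xi> \<in> Hneg j \<Longrightarrow> snorm i (x \<xi>) \<le> C * dnorm j \<xi>"
    using Schwartz_bound[OF x, where k=j and n=i] by blast
  have "cmod (x (unit_seq b) a) * weight a ^ i * weight b ^ j \<le> C" for a b
  proof -
    have "cmod (x (unit_seq b) a) * weight a ^ i \<le> snorm i (x (unit_seq b))"
      by (rule norm_coord_le_snorm[OF Schwartz_s_space[OF x unit_seq_s_dual]])
    also have "\<dots> \<le> C * dnorm j (unit_seq b)"
      by (rule C(2)[OF unit_seq_Hneg])
    finally show ?thesis
      by (simp add: dnorm_unit_seq pos_le_divide_eq)
  qed
  then show "\<exists>C. \<forall>a b. \<bar>cmod (x (unit_seq b) a)\<bar> * weight a ^ i * weight b ^ j \<le> C"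
    by (intro exI[of _ C]) simp
qed

lemma rapid_decay_mult:
  assumes P: "rapid_decay P" and Q: "rapid_decay Q"
  shows "rapid_decay (\<lambda>a b. P a b * Q a b)"
  unfolding rapid_decay_def
proof (intro allI)
  fix i j
  obtain C1 where C1: "0 \<le> C1" "\<And>a b. \<bar>P a b\<bar> \<le> C1 / (weight a ^ i * weight b ^ j)"
    using rapid_decay_bound[OF P] by blast
  obtain C2 where C2: "0 \<le> C2" "\<And>a b. \<bar>Q a b\<bar> \<le> C2 / (weight a ^ 0 * weight b ^ 0)"
    using rapid_decay_bound[OF Q] by blast
  have "\<bar>P a b * Q a b\<bar> * weight a ^ i * weight b ^ j \<le> C1 * C2" for a b
    using mult_mono[OF C1(2)[of a b] C2(2)[of a b]] C1(1)
    by (simp add: abs_mult field_simps)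
  then show "\<exists>C. \<forall>a b. \<bar>P a b * Q a b\<bar> * weight a ^ i * weight b ^ j \<le> C"
    by blast
qed

lemma rapid_decay_mult_weight:
  assumes "rapid_decay P"
  shows "rapid_decay (\<lambda>a b. P a b * weight a ^ k * weight b ^ l)"
  unfolding rapid_decay_def
proof (intro allI)
  fix i j
  obtain C where "\<And>a b. \<bar>P a b\<bar> * weight a ^ (k + i) * weight b ^ (l + j) \<le> C"
    using assms unfolding rapid_decay_def by blast
  then show "\<exists>C. \<forall>a b. \<bar>P a b * weight a ^ k * weight b ^ l\<bar> * weight a ^ i * weight b ^ j \<le> C"
    by (auto simp: abs_mult power_add ac_simps)
qed

lemma rapid_decay_add:
  assumes P: "rapid_decay P" and Q: "rapid_decay Q"
  shows "rapid_decay (\<lambda>a b. P a b + Q a b)"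
  unfolding rapid_decay_def
proof (intro allI)
  fix i j
  obtain C1 C2 where "\<And>a b. \<bar>P a b\<bar> * weight a ^ i * weight b ^ j \<le> C1"
    and "\<And>a b. \<bar>Q a b\<bar> * weight a ^ i * weight b ^ j \<le> C2"
    using P Q unfolding rapid_decay_def by meson
  moreover have "\<bar>P a b + Q a b\<bar> * weight a ^ i * weight b ^ j
      \<le> \<bar>P a b\<bar> * weight a ^ i * weight b ^ j + \<bar>Q a b\<bar> * weight a ^ i * weight b ^ j" for a b
    by (simp add: mult_right_mono abs_triangle_ineq flip: distrib_right)
  ultimately show "\<exists>C. \<forall>a b. \<bar>P a b + Q a b\<bar> * weight a ^ i * weight b ^ j \<le> C"
    by (meson add_mono order_trans)
qed

lemma rapid_decay_sum:
  assumes "finite J" and "\<And>j. j \<in> J \<Longrightarrow> rapid_decay (P j)"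
  shows "rapid_decay (\<lambda>a b. \<Sum>j\<in>J. P j a b)"
  using assms
proof (induction J rule: finite_induct)
  case empty
  then show ?case
    unfolding rapid_decay_def by (auto intro: exI[of _ 0])
next
  case (insert j J)
  then show ?case
    by (simp add: rapid_decay_add)
qed

lemma rapid_decay_double_series:
  assumes "rapid_decay P"
  shows "summable (P a)" and "summable (\<lambda>a. P a b)" and "summable (\<lambda>a. \<Sum>b. P a b)"
    and "(\<Sum>a. \<Sum>b. P a b) = (\<Sum>b. \<Sum>a. P a b)"
proof -
  obtain C where C: "0 \<le> C" "\<And>a b. \<bar>P a b\<bar> \<le> C / (weight a ^ 2 * weight b ^ 2)"
    using rapid_decay_bound[OF assms] by blast
  define q where "q i = 1 / (weight i)\<^sup>2" for i
  have q: "summable q" "\<And>i. 0 \<le> q i"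
    unfolding q_def by (rule sums_summable[OF inverse_weight_sq_sums]) simp
  have bound: "norm (P a b) \<le> (C * q a) * q b" for a b
    using C(2)[of a b] by (simp add: q_def)
  show "summable (P a)"
    by (rule summable_comparison_test'[OF summable_mult[OF q(1)] bound])
  show "summable (\<lambda>a. P a b)"
    by (rule summable_comparison_test'[OF summable_mult2[OF summable_mult[OF q(1)]] bound])
  have "norm (\<Sum>b. P a b) \<le> (C * suminf q) * q a" for a
  proof -
    have "norm (\<Sum>b. P a b) \<le> (\<Sum>b. (C * q a) * q b)"
      by (rule norm_suminf_le[OF bound summable_mult[OF q(1)]])
    then show ?thesis
      unfolding suminf_mult[OF q(1)] by (simp add: ac_simps)
  qed
  then show "summable (\<lambda>a. \<Sum>b. P a b)"
    by (rule summable_comparison_test'[OF summable_mult[OF q(1)]])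
  show "(\<Sum>a. \<Sum>b. P a b) = (\<Sum>b. \<Sum>a. P a b)"
    by (rule suminf_swap_dominated[OF bound summable_mult[OF q(1)] q(1)]) (simp_all add: C(1) q(2))
qed

section \<open>The adjoint\<close>

definition seq_trunc :: "seq \<Rightarrow> nat \<Rightarrow> seq" where
  "seq_trunc \<eta> N = (\<lambda>i. if i < N then \<eta> i else 0)"

lemma seq_trunc_s_dual: "seq_trunc \<eta> N \<in> s_dual"
proof -
  have "summable (wneg 0 (seq_trunc \<eta> N))"
    by (rule summable_finite[of "{..<N}"]) (auto simp: wneg_def seq_trunc_def)
  then show ?thesis
    by (auto simp: s_dual_def)
qed

lemma dnorm_tail_tendsto_zero:
  assumes "\<eta> \<in> Hneg k"
  defines "tail N \<equiv> (\<lambda>i. \<eta> i - seq_trunc \<eta> N i)"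
  shows "tail N \<in> Hneg k" and "(\<lambda>N. dnorm k (tail N)) \<longlonglongrightarrow> 0"
proof -
  have s: "summable (wneg k \<eta>)"
    using assms(1) by (simp add: Hneg_def)
  have w: "wneg k (tail N) = (\<lambda>i. wneg k \<eta> i - (if i \<in> {..<N} then wneg k \<eta> i else 0))" for N
    by (auto simp: tail_def seq_trunc_def wneg_def fun_eq_iff)
  have sums: "wneg k (tail N) sums (suminf (wneg k \<eta>) - (\<Sum>i<N. wneg k \<eta> i))" for N
    unfolding w by (intro sums_diff summable_sums[OF s] sums_If_finite_set) simp
  then show "tail N \<in> Hneg k" for N
    unfolding Hneg_def using sums_summable by blast
  have "(\<lambda>N. suminf (wneg k \<eta>) - (\<Sum>i<N. wneg k \<eta> i)) \<longlonglongrightarrow> 0"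
    using tendsto_diff[OF tendsto_const[of "suminf (wneg k \<eta>)"] summable_LIMSEQ[OF s]] by simp
  from tendsto_real_sqrt[OF this] show "(\<lambda>N. dnorm k (tail N)) \<longlonglongrightarrow> 0"
    unfolding dnorm_def using sums by (simp add: sums_iff)
qed

lemma Schwartz_apply_seq_trunc:
  assumes x: "x \<in> Schwartz"
  shows "x (seq_trunc \<eta> N) = (\<lambda>a. \<Sum>b<N. \<eta> b * x (unit_seq b) a)"
proof (induction N)
  case 0
  then show ?case
    using Schwartz_zero[OF x] by (simp add: seq_trunc_def)
next
  case (Suc N)
  have "seq_trunc \<eta> (Suc N) = (\<lambda>i. 1 * seq_trunc \<eta> N i + \<eta> N * unit_seq N i)"
    by (auto simp: fun_eq_iff seq_trunc_def unit_seq_def less_Suc_eq)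
  then show ?case
    using Suc Schwartz_lincomb[OF x seq_trunc_s_dual unit_seq_s_dual, of 1 \<eta> N "\<eta> N" N] by simp
qed

text \<open>The truncations of \<open>\<eta>\<close> converge to \<open>\<eta>\<close> in \<open>H_-k\<close>, so by continuity their images converge
  to \<open>x \<eta>\<close>.\<close>

lemma Schwartz_apply_sums:
  assumes x: "x \<in> Schwartz" and \<eta>: "\<eta> \<in> s_dual"
  shows "(\<lambda>b. \<eta> b * x (unit_seq b) a) sums (x \<eta> a)"
proof -
  obtain k where k: "\<eta> \<in> Hneg k"
    using \<eta> by (rule s_dual_HnegE)
  obtain C where C: "0 \<le> C" "\<And>\<zeta>. \<zeta> \<in> Hneg k \<Longrightarrow> snorm 0 (x \<zeta>) \<le> C * dnorm k \<zeta>"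
    using Schwartz_bound[OF x, where k=k and n=0] by blast
  define tail where "tail N = (\<lambda>i. \<eta> i - seq_trunc \<eta> N i)" for N
  note tail = dnorm_tail_tendsto_zero[OF k, folded tail_def]
  have x_tail: "x (tail N) = (\<lambda>i. x \<eta> i - x (seq_trunc \<eta> N) i)" for N
    using Schwartz_lincomb[OF x \<eta> seq_trunc_s_dual, of 1 "-1"] by (simp add: tail_def)
  have bound: "norm (x \<eta> a - x (seq_trunc \<eta> N) a) \<le> C * dnorm k (tail N)" for N
  proof -
    have "tail N \<in> s_dual"
      using tail(1) Hneg_subset_s_dual by blast
    then have "cmod (x (tail N) a) * weight a ^ 0 \<le> snorm 0 (x (tail N))"
      by (intro norm_coord_le_snorm Schwartz_s_space[OF x])
    also have "\<dots> \<le> C * dnorm k (tail N)"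
      by (rule C(2)[OF tail(1)])
    finally show ?thesis
      by (simp add: x_tail)
  qed
  have "(\<lambda>N. C * dnorm k (tail N)) \<longlonglongrightarrow> 0"
    using tendsto_mult_right_zero[OF tail(2)] by simp
  then have "(\<lambda>N. x \<eta> a - x (seq_trunc \<eta> N) a) \<longlonglongrightarrow> 0"
    by (rule Lim_null_comparison[OF always_eventually[OF allI[OF bound]]])
  then have "(\<lambda>N. x \<eta> a - (x \<eta> a - x (seq_trunc \<eta> N) a)) \<longlonglongrightarrow> x \<eta> a - 0"
    by (intro tendsto_diff tendsto_const)
  then show ?thesis
    unfolding sums_def by (simp add: Schwartz_apply_seq_trunc[OF x])
qed

lemma summable_wpos_of_decay:
  assumes decay: "\<And>i. cmod (y i) \<le> M / weight i ^ (n + 1)"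
  shows "summable (wpos n y)" and "snorm n y \<le> M * sqrt (pi\<^sup>2 / 6)"
proof -
  have M: "0 \<le> M"
    using order_trans[OF norm_ge_zero decay[of 0]] by (simp add: zero_le_divide_iff)
  have le: "wpos n y i \<le> M\<^sup>2 * (1 / (weight i)\<^sup>2)" for i
  proof -
    have "cmod (y i) * weight i ^ n \<le> M / weight i ^ (n + 1) * weight i ^ n"
      using decay[of i] by (rule mult_right_mono) simp
    also have "\<dots> = M / weight i"
      by (simp add: field_simps del: of_nat_Suc)
    finally show ?thesis
      unfolding wpos_eq_square using power_mono[of _ "M / weight i" 2]
      by (simp add: power_divide)
  qed
  note q = sums_summable[OF inverse_weight_sq_sums] sums_unique[OF inverse_weight_sq_sums]
  show s: "summable (wpos n y)"
    using le wpos_nonneg[of n y]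
    by (intro summable_comparison_test'[OF summable_mult[OF q(1), of "M\<^sup>2"], where N=0]) simp
  have "suminf (wpos n y) \<le> (\<Sum>i. M\<^sup>2 * (1 / (weight i)\<^sup>2))"
    by (rule suminf_le[OF le s summable_mult[OF q(1)]])
  also have "\<dots> = M\<^sup>2 * (pi\<^sup>2 / 6)"
    unfolding suminf_mult[OF q(1)] q(2) ..
  finally have "snorm n y \<le> sqrt (M\<^sup>2 * (pi\<^sup>2 / 6))"
    unfolding snorm_def by (rule real_sqrt_le_mono)
  then show "snorm n y \<le> M * sqrt (pi\<^sup>2 / 6)"
    using M by (simp only: real_sqrt_mult real_sqrt_abs abs_of_nonneg)
qed

definition conj_transpose :: "op \<Rightarrow> op" where
  "conj_transpose x = (\<lambda>\<xi>. if \<xi> \<in> s_dual then (\<lambda>i. pairing \<xi> (x (unit_seq i))) else (\<lambda>_. 0))"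

lemma conj_transpose_estimate:
  assumes x: "x \<in> Schwartz"
  obtains C where "\<And>\<xi>. \<xi> \<in> Hneg k \<Longrightarrow> summable (wpos n (\<lambda>i. pairing \<xi> (x (unit_seq i))))"
    and "\<And>\<xi>. \<xi> \<in> Hneg k \<Longrightarrow> snorm n (\<lambda>i. pairing \<xi> (x (unit_seq i))) \<le> C * dnorm k \<xi>"
proof -
  obtain C where C: "0 \<le> C" "\<And>\<zeta>. \<zeta> \<in> Hneg (n + 1) \<Longrightarrow> snorm k (x \<zeta>) \<le> C * dnorm (n + 1) \<zeta>"
    using Schwartz_bound[OF x, where k="n + 1" and n=k] by blast
  have decay: "cmod (pairing \<xi> (x (unit_seq i))) \<le> dnorm k \<xi> * C / weight i ^ (n + 1)"
    if "\<xi> \<in> Hneg k" for \<xi> i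
  proof -
    have "cmod (pairing \<xi> (x (unit_seq i))) \<le> dnorm k \<xi> * snorm k (x (unit_seq i))"
      by (rule norm_pairing_le(2)[OF that Schwartz_s_space[OF x unit_seq_s_dual]])
    also have "\<dots> \<le> dnorm k \<xi> * (C * dnorm (n + 1) (unit_seq i))"
      by (rule mult_left_mono[OF C(2)[OF unit_seq_Hneg] dnorm_nonneg[OF that]])
    finally show ?thesis
      by (simp add: dnorm_unit_seq)
  qed
  show thesis
  proof (rule that)
    fix \<xi> assume "\<xi> \<in> Hneg k"
    note est = summable_wpos_of_decay[OF decay[OF this]]
    show "summable (wpos n (\<lambda>i. pairing \<xi> (x (unit_seq i))))"
      by (rule est(1))
    show "snorm n (\<lambda>i. pairing \<xi> (x (unit_seq i))) \<le> C * sqrt (pi\<^sup>2 / 6) * dnorm k \<xi>"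
      using est(2) by (simp add: ac_simps)
  qed
qed

lemma conj_transpose_Schwartz:
  assumes x: "x \<in> Schwartz"
  shows "conj_transpose x \<in> Schwartz"
  unfolding Schwartz_def mem_Collect_eq
proof (intro conjI ballI allI impI)
  fix \<xi> :: seq
  assume \<xi>: "\<xi> \<in> s_dual"
  then obtain k where "\<xi> \<in> Hneg k"
    by (rule s_dual_HnegE)
  then have "summable (wpos n (\<lambda>i. pairing \<xi> (x (unit_seq i))))" for n
    using conj_transpose_estimate[OF x, of k n] by blast
  then show "conj_transpose x \<xi> \<in> s_space"
    using \<xi> by (simp add: conj_transpose_def s_space_def)
next
  fix \<xi> :: seq
  assume "\<xi> \<notin> s_dual"
  then show "conj_transpose x \<xi> = (\<lambda>_. 0)"
    by (simp add: conj_transpose_def)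
next
  fix \<xi> \<eta> :: seq and a b :: complex
  assume \<xi>: "\<xi> \<in> s_dual" and \<eta>: "\<eta> \<in> s_dual"
  then show "conj_transpose x (\<lambda>i. a * \<xi> i + b * \<eta> i)
      = (\<lambda>i. a * conj_transpose x \<xi> i + b * conj_transpose x \<eta> i)"
    by (simp add: conj_transpose_def s_dual_lincomb pairing_lincomb_left
        Schwartz_s_space[OF x unit_seq_s_dual])
next
  fix k n
  obtain C where "\<And>\<xi>. \<xi> \<in> Hneg k \<Longrightarrow> snorm n (\<lambda>i. pairing \<xi> (x (unit_seq i))) \<le> C * dnorm k \<xi>"
    using conj_transpose_estimate[OF x, of k n] by blast
  then show "\<exists>C. \<forall>\<xi>\<in>Hneg k. snorm n (conj_transpose x \<xi>) \<le> C * dnorm k \<xi>"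
    using Hneg_subset_s_dual by (auto simp: conj_transpose_def)
qed

lemma summable_div_weight_Hneg:
  assumes "\<xi> \<in> Hneg k"
  shows "summable (\<lambda>i. cmod (\<xi> i) / weight i ^ (k + 1))"
proof -
  have "wneg k \<xi> = (\<lambda>i. (cmod (\<xi> i) / weight i ^ k)\<^sup>2)"
    by (rule ext) (rule wneg_eq_square)
  then have "summable (\<lambda>i. (cmod (\<xi> i) / weight i ^ k)\<^sup>2)"
    using assms by (simp add: Hneg_def)
  moreover have "summable (\<lambda>i. (1 / weight i)\<^sup>2)"
    using sums_summable[OF inverse_weight_sq_sums] by (simp add: power_divide)
  ultimately have "summable (\<lambda>i. cmod (\<xi> i) / weight i ^ k * (1 / weight i))"
    by (rule suminf_Cauchy_Schwarz(1)[rotated 2]) simp_all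
  then show ?thesis
    by (simp add: field_simps)
qed

text \<open>Fubini for \<open>\<Sum>_i \<Sum>_a \<xi>_a conj(x(a,i)) conj(\<eta>_i)\<close>, which converges absolutely because the
  entries of \<open>x\<close> decay rapidly.\<close>

lemma conj_transpose_pairing:
  assumes x: "x \<in> Schwartz" and \<xi>: "\<xi> \<in> s_dual" and \<eta>: "\<eta> \<in> s_dual"
  shows "pairing (conj_transpose x \<xi>) \<eta> = pairing \<xi> (x \<eta>)"
proof -
  obtain k1 where k1: "\<xi> \<in> Hneg k1"
    using \<xi> by (rule s_dual_HnegE)
  obtain k2 where k2: "\<eta> \<in> Hneg k2"
    using \<eta> by (rule s_dual_HnegE)
  obtain C where C: "0 \<le> C"
    "\<And>a i. \<bar>cmod (x (unit_seq i) a)\<bar> \<le> C / (weight a ^ (k1 + 1) * weight i ^ (k2 + 1))"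
    using rapid_decay_bound[OF rapid_decay_entries[OF x]] by blast
  define F where "F i a = \<xi> a * cnj (x (unit_seq i) a) * cnj (\<eta> i)" for i a
  have F: "norm (F i a) \<le> (C * (cmod (\<eta> i) / weight i ^ (k2 + 1))) * (cmod (\<xi> a) / weight a ^ (k1 + 1))"
    for i a
  proof -
    have "norm (F i a) = cmod (\<xi> a) * cmod (x (unit_seq i) a) * cmod (\<eta> i)"
      by (simp add: F_def norm_mult)
    also have "\<dots> \<le> cmod (\<xi> a) * (C / (weight a ^ (k1 + 1) * weight i ^ (k2 + 1))) * cmod (\<eta> i)"
      using C(2)[of i a] by (intro mult_right_mono mult_left_mono) simp_all
    finally show ?thesis
      by (simp add: field_simps)
  qed
  have inner: "summable (\<lambda>a. \<xi> a * cnj (x (unit_seq i) a))" for i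
    by (rule summable_norm_cancel[OF norm_pairing_le(1)[OF k1 Schwartz_s_space[OF x unit_seq_s_dual]]])
  have "pairing (conj_transpose x \<xi>) \<eta> = (\<Sum>i. \<Sum>a. F i a)"
    using \<xi> inner by (simp add: conj_transpose_def pairing_def F_def suminf_mult2)
  also have "\<dots> = (\<Sum>a. \<Sum>i. F i a)"
    using summable_div_weight_Hneg[OF k1] summable_div_weight_Hneg[OF k2] C(1)
    by (intro suminf_swap_dominated[OF F] summable_mult) simp_all
  also have "\<dots> = (\<Sum>a. \<xi> a * cnj (x \<eta> a))"
  proof (rule suminf_cong)
    fix a
    have "(\<lambda>i. cnj (\<eta> i * x (unit_seq i) a)) sums cnj (x \<eta> a)"
      using Schwartz_apply_sums[OF x \<eta>] by (simp only: sums_cnj)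
    from sums_mult[OF this, of "\<xi> a"] show "(\<Sum>i. F i a) = \<xi> a * cnj (x \<eta> a)"
      by (simp add: F_def sums_iff ac_simps)
  qed
  also have "\<dots> = pairing \<xi> (x \<eta>)"
    by (simp add: pairing_def)
  finally show ?thesis .
qed

lemma adj_eq_conj_transpose:
  assumes x: "x \<in> Schwartz"
  shows "adj x = conj_transpose x"
  unfolding adj_def
proof (rule the_equality)
  show "conj_transpose x \<in> Schwartz \<and>
      (\<forall>\<xi>\<in>s_dual. \<forall>\<eta>\<in>s_dual. pairing (conj_transpose x \<xi>) \<eta> = pairing \<xi> (x \<eta>))"
    using conj_transpose_Schwartz[OF x] conj_transpose_pairing[OF x] by blast
next
  fix y
  assume y: "y \<in> Schwartz \<and> (\<forall>\<xi>\<in>s_dual. \<forall>\<eta>\<in>s_dual. pairing (y \<xi>) \<eta> = pairing \<xi> (x \<eta>))"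
  show "y = conj_transpose x"
  proof (intro ext)
    fix \<xi> i
    show "y \<xi> i = conj_transpose x \<xi> i"
    proof (cases "\<xi> \<in> s_dual")
      case True
      then have "pairing (y \<xi>) (unit_seq i) = pairing \<xi> (x (unit_seq i))"
        using y unit_seq_s_dual by blast
      with True show ?thesis
        by (simp add: conj_transpose_def pairing_unit_seq_right)
    next
      case False
      with y show ?thesis
        by (simp add: conj_transpose_def Schwartz_outside)
    qed
  qed
qed

lemma adj_Schwartz: "x \<in> Schwartz \<Longrightarrow> adj x \<in> Schwartz"
  by (simp add: adj_eq_conj_transpose conj_transpose_Schwartz)

lemma adj_apply: "x \<in> Schwartz \<Longrightarrow> \<xi> \<in> s_dual \<Longrightarrow> adj x \<xi> i = pairing \<xi> (x (unit_seq i))"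
  by (simp add: adj_eq_conj_transpose conj_transpose_def)

lemma adj_unit_seq: "x \<in> Schwartz \<Longrightarrow> adj x (unit_seq a) b = cnj (x (unit_seq b) a)"
  by (simp add: adj_apply unit_seq_s_dual pairing_unit_seq_left)

lemma Schwartz_apply_eq_pairing:
  assumes x: "x \<in> Schwartz" and \<eta>: "\<eta> \<in> s_dual"
  shows "x \<eta> a = pairing \<eta> (adj x (unit_seq a))"
  using sums_unique[OF Schwartz_apply_sums[OF x \<eta>, of a]]
  by (simp add: pairing_def adj_unit_seq[OF x])

section \<open>Weighted Hilbert-Schmidt estimates\<close>

definition weighted_hs_sq :: "nat \<Rightarrow> op \<Rightarrow> real" where
  "weighted_hs_sq n x = (\<Sum>a. \<Sum>b. (cmod (x (unit_seq b) a))\<^sup>2 * weight a ^ (2 * n) * weight b ^ (2 * n))"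

lemma rapid_decay_entries_sq:
  "x \<in> Schwartz \<Longrightarrow> rapid_decay (\<lambda>a b. (cmod (x (unit_seq b) a))\<^sup>2)"
  using rapid_decay_mult[OF rapid_decay_entries rapid_decay_entries] by (simp add: power2_eq_square)

lemma snorm_adj_unit_seq_sq:
  assumes x: "x \<in> Schwartz"
  shows "(snorm n (adj x (unit_seq a)))\<^sup>2 = (\<Sum>b. (cmod (x (unit_seq b) a))\<^sup>2 * weight b ^ (2 * n))"
proof -
  have "summable (wpos n (adj x (unit_seq a)))"
    using Schwartz_s_space[OF adj_Schwartz[OF x] unit_seq_s_dual] by (simp add: s_space_def)
  then have "(snorm n (adj x (unit_seq a)))\<^sup>2 = suminf (wpos n (adj x (unit_seq a)))"
    by (simp add: snorm_def suminf_nonneg wpos_nonneg)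
  also have "\<dots> = (\<Sum>b. (cmod (x (unit_seq b) a))\<^sup>2 * weight b ^ (2 * n))"
    by (simp add: wpos_def[abs_def] adj_unit_seq[OF x])
  finally show ?thesis .
qed

lemma opnorm_le_sqrt_weighted_hs_sq:
  assumes x: "x \<in> Schwartz"
  shows "opnorm n x \<le> sqrt (weighted_hs_sq n x)"
proof (rule opnorm_least)
  fix \<xi>
  assume \<xi>: "\<xi> \<in> Hneg n" and d: "dnorm n \<xi> \<le> 1"
  then have \<xi>_dual: "\<xi> \<in> s_dual"
    using Hneg_subset_s_dual by blast
  define F where "F = (\<lambda>a b. (cmod (x (unit_seq b) a))\<^sup>2 * weight a ^ (2 * n) * weight b ^ (2 * n))"
  have F: "rapid_decay F"
    unfolding F_def by (intro rapid_decay_mult_weight rapid_decay_entries_sq x)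
  have "wpos n (x \<xi>) a \<le> (\<Sum>b. F a b)" for a
  proof -
    have u: "adj x (unit_seq a) \<in> s_space"
      by (rule Schwartz_s_space[OF adj_Schwartz[OF x] unit_seq_s_dual])
    have "cmod (x \<xi> a) \<le> dnorm n \<xi> * snorm n (adj x (unit_seq a))"
      unfolding Schwartz_apply_eq_pairing[OF x \<xi>_dual] by (rule norm_pairing_le(2)[OF \<xi> u])
    also have "\<dots> \<le> snorm n (adj x (unit_seq a))"
      using mult_right_mono[OF d snorm_nonneg[OF u]] by simp
    finally have "(cmod (x \<xi> a))\<^sup>2 \<le> (snorm n (adj x (unit_seq a)))\<^sup>2"
      by (rule power_mono) simp
    then have "(cmod (x \<xi> a))\<^sup>2 \<le> (\<Sum>b. (cmod (x (unit_seq b) a))\<^sup>2 * weight b ^ (2 * n))"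
      by (simp only: snorm_adj_unit_seq_sq[OF x])
    then have "wpos n (x \<xi>) a \<le> (\<Sum>b. (cmod (x (unit_seq b) a))\<^sup>2 * weight b ^ (2 * n)) * weight a ^ (2 * n)"
      unfolding wpos_def by (rule mult_right_mono) simp
    also have "\<dots> = (\<Sum>b. F a b)"
    proof -
      have "summable (\<lambda>b. (cmod (x (unit_seq b) a))\<^sup>2 * weight a ^ 0 * weight b ^ (2 * n))"
        by (rule rapid_decay_double_series(1)[OF rapid_decay_mult_weight[OF rapid_decay_entries_sq[OF x]]])
      then show ?thesis
        by (subst suminf_mult2) (simp_all add: F_def ac_simps)
    qed
    finally show ?thesis .
  qed
  then have "suminf (wpos n (x \<xi>)) \<le> weighted_hs_sq n x"
    using Schwartz_s_space[OF x \<xi>_dual] rapid_decay_double_series(3)[OF F]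
    by (auto simp: weighted_hs_sq_def F_def s_space_def intro!: suminf_le)
  then show "snorm n (x \<xi>) \<le> sqrt (weighted_hs_sq n x)"
    unfolding snorm_def by (rule real_sqrt_le_mono)
qed

lemma diagonal_le_opnorm:
  assumes z: "z \<in> Schwartz"
  shows "weight b ^ (2 * k) * cmod (z (unit_seq b) b) \<le> opnorm k z"
proof -
  define c where "c = complex_of_real (weight b ^ k)"
  have c: "cmod c = weight b ^ k"
    unfolding c_def norm_of_real by simp
  define \<xi> where "\<xi> = (\<lambda>i. c * unit_seq b i)"
  have \<xi>: "\<xi> \<in> Hneg k" "dnorm k \<xi> = 1"
    using Hneg_scale[OF unit_seq_Hneg[of b k], of c] c by (simp_all add: \<xi>_def dnorm_unit_seq)
  have "weight b ^ (2 * k) * cmod (z (unit_seq b) b) = cmod (z \<xi> b) * weight b ^ k"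
    using c by (simp add: \<xi>_def Schwartz_scale[OF z unit_seq_s_dual] norm_mult mult_2 power_add)
  also have "\<dots> \<le> snorm k (z \<xi>)"
    using \<xi>(1) Hneg_subset_s_dual by (intro norm_coord_le_snorm Schwartz_s_space[OF z]) blast
  also have "\<dots> \<le> opnorm k z"
    using opnorm_upper[OF z \<xi>(1)] \<xi>(2) by simp
  finally show ?thesis .
qed

lemma adj_mult_diagonal:
  assumes x: "x \<in> Schwartz"
  shows "adj x (x (unit_seq b)) b = of_real (\<Sum>a. (cmod (x (unit_seq b) a))\<^sup>2)"
proof -
  have u: "x (unit_seq b) \<in> s_space"
    by (rule Schwartz_s_space[OF x unit_seq_s_dual])
  then have "x (unit_seq b) \<in> s_dual"
    using s_space_subset_s_dual by blast
  then show ?thesis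
    by (simp add: adj_apply[OF x] pairing_self(2)[OF u])
qed

lemma mult_adj_diagonal:
  assumes x: "x \<in> Schwartz"
  shows "x (adj x (unit_seq a)) a = of_real (\<Sum>b. (cmod (x (unit_seq b) a))\<^sup>2)"
proof -
  have "adj x (unit_seq a) \<in> s_space"
    by (rule Schwartz_s_space[OF adj_Schwartz[OF x] unit_seq_s_dual])
  moreover from this have "adj x (unit_seq a) \<in> s_dual"
    using s_space_subset_s_dual by blast
  ultimately show ?thesis
    by (simp add: Schwartz_apply_eq_pairing[OF x] pairing_self(2) adj_unit_seq[OF x])
qed

lemma column_sums_le_opnorm:
  assumes J: "finite J" and x: "\<And>j. j \<in> J \<Longrightarrow> x j \<in> Schwartz"
  shows "weight b ^ (2 * k) * (\<Sum>j\<in>J. \<Sum>a. (cmod (x j (unit_seq b) a))\<^sup>2)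
    \<le> opnorm k (opsum (\<lambda>j. sprod (adj (x j)) (x j)) J)"
proof -
  define s where "s = (\<Sum>j\<in>J. \<Sum>a. (cmod (x j (unit_seq b) a))\<^sup>2)"
  have "opsum (\<lambda>j. sprod (adj (x j)) (x j)) J (unit_seq b) b = of_real s"
    using x by (simp add: s_def opsum_def sprod_def adj_mult_diagonal)
  moreover have "0 \<le> s"
    unfolding s_def using x
    by (intro sum_nonneg suminf_nonneg pairing_self(1) Schwartz_s_space unit_seq_s_dual) simp_all
  moreover have "opsum (\<lambda>j. sprod (adj (x j)) (x j)) J \<in> Schwartz"
    using J x by (simp add: Schwartz_opsum Schwartz_sprod adj_Schwartz)
  ultimately show ?thesis
    unfolding s_def[symmetric] using diagonal_le_opnorm[of _ b k] by fastforce
qed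

lemma row_sums_le_opnorm:
  assumes J: "finite J" and x: "\<And>j. j \<in> J \<Longrightarrow> x j \<in> Schwartz"
  shows "weight a ^ (2 * k) * (\<Sum>j\<in>J. \<Sum>b. (cmod (x j (unit_seq b) a))\<^sup>2)
    \<le> opnorm k (opsum (\<lambda>j. sprod (x j) (adj (x j))) J)"
proof -
  define s where "s = (\<Sum>j\<in>J. \<Sum>b. (cmod (x j (unit_seq b) a))\<^sup>2)"
  have "opsum (\<lambda>j. sprod (x j) (adj (x j))) J (unit_seq a) a = of_real s"
    using x by (simp add: s_def opsum_def sprod_def mult_adj_diagonal)
  moreover have "0 \<le> s"
    unfolding s_def using x rapid_decay_double_series(1)[OF rapid_decay_entries_sq]
    by (intro sum_nonneg suminf_nonneg) simp_all
  moreover have "opsum (\<lambda>j. sprod (x j) (adj (x j))) J \<in> Schwartz"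
    using J x by (simp add: Schwartz_opsum Schwartz_sprod adj_Schwartz)
  ultimately show ?thesis
    unfolding s_def[symmetric] using diagonal_le_opnorm[of _ a k] by fastforce
qed

lemma suminf2_Cauchy_Schwarz:
  fixes f g :: "nat \<Rightarrow> nat \<Rightarrow> real"
  assumes f0: "\<And>a b. 0 \<le> f a b" and g0: "\<And>a b. 0 \<le> g a b"
    and f: "\<And>a. summable (\<lambda>b. (f a b)\<^sup>2)" "summable (\<lambda>a. \<Sum>b. (f a b)\<^sup>2)"
    and g: "\<And>a. summable (\<lambda>b. (g a b)\<^sup>2)" "summable (\<lambda>a. \<Sum>b. (g a b)\<^sup>2)"
  shows "(\<Sum>a. \<Sum>b. f a b * g a b) \<le> sqrt (\<Sum>a. \<Sum>b. (f a b)\<^sup>2) * sqrt (\<Sum>a. \<Sum>b. (g a b)\<^sup>2)"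
proof -
  define F where "F a = sqrt (\<Sum>b. (f a b)\<^sup>2)" for a
  define G where "G a = sqrt (\<Sum>b. (g a b)\<^sup>2)" for a
  have F2: "(\<lambda>a. (F a)\<^sup>2) = (\<lambda>a. \<Sum>b. (f a b)\<^sup>2)" and G2: "(\<lambda>a. (G a)\<^sup>2) = (\<lambda>a. \<Sum>b. (g a b)\<^sup>2)"
    using f(1) g(1) by (simp_all add: fun_eq_iff F_def G_def suminf_nonneg)
  note inner = suminf_Cauchy_Schwarz[OF f0 g0 f(1) g(1), folded F_def G_def]
  note outer = suminf_Cauchy_Schwarz[of F G, unfolded F2 G2, OF _ _ f(2) g(2)]
  have FG0: "0 \<le> F a" "0 \<le> G a" for a
    using f(1) g(1) by (simp_all add: F_def G_def suminf_nonneg)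
  have "summable (\<lambda>a. \<Sum>b. f a b * g a b)"
    using inner f0 g0 by (intro summable_comparison_test'[OF outer(1)[OF FG0], where N=0])
      (simp add: suminf_nonneg mult_nonneg_nonneg)
  then have "(\<Sum>a. \<Sum>b. f a b * g a b) \<le> (\<Sum>a. F a * G a)"
    by (rule suminf_le[OF inner(2) _ outer(1)[OF FG0]])
  also have "\<dots> \<le> sqrt (\<Sum>a. \<Sum>b. (f a b)\<^sup>2) * sqrt (\<Sum>a. \<Sum>b. (g a b)\<^sup>2)"
    by (rule outer(2)[OF FG0])
  finally show ?thesis .
qed

lemma rapid_decay_transpose:
  assumes "rapid_decay P"
  shows "rapid_decay (\<lambda>a b. P b a)"
  unfolding rapid_decay_def
proof (intro allI)
  fix i j
  obtain C where C: "\<And>a b. \<bar>P a b\<bar> * weight a ^ j * weight b ^ i \<le> C"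
    using assms unfolding rapid_decay_def by blast
  have "\<bar>P b a\<bar> * weight a ^ i * weight b ^ j \<le> C" for a b
    using C[of b a] by (simp add: ac_simps)
  then show "\<exists>C. \<forall>a b. \<bar>P b a\<bar> * weight a ^ i * weight b ^ j \<le> C"
    by blast
qed

lemma weighted_row_sums_le:
  assumes P: "rapid_decay P" and row: "\<And>a. weight a ^ (2 * k + 2) * (\<Sum>b. P a b) \<le> B"
  shows "(\<Sum>a. \<Sum>b. P a b * weight a ^ (2 * k)) \<le> B * (pi\<^sup>2 / 6)"
proof -
  note q = sums_summable[OF inverse_weight_sq_sums] sums_unique[OF inverse_weight_sq_sums]
  have "(\<Sum>b. P a b * weight a ^ (2 * k)) \<le> B * (1 / (weight a)\<^sup>2)" for a
    using row[of a] suminf_mult2[OF rapid_decay_double_series(1)[OF P], of a "weight a ^ (2 * k)"]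
    by (simp add: power_add power2_eq_square pos_le_divide_eq ac_simps del: of_nat_Suc)
  moreover have "summable (\<lambda>a. \<Sum>b. P a b * weight a ^ (2 * k))"
    using rapid_decay_double_series(3)[OF rapid_decay_mult_weight[OF P, of "2 * k" 0]] by simp
  ultimately have "(\<Sum>a. \<Sum>b. P a b * weight a ^ (2 * k)) \<le> (\<Sum>a. B * (1 / (weight a)\<^sup>2))"
    by (rule suminf_le[OF _ _ summable_mult[OF q(1)]])
  then show ?thesis
    unfolding suminf_mult[OF q(1)] q(2) .
qed

lemma weighted_column_sums_le:
  assumes P: "rapid_decay P" and col: "\<And>b. weight b ^ (2 * k + 2) * (\<Sum>a. P a b) \<le> A"
  shows "(\<Sum>a. \<Sum>b. P a b * weight b ^ (2 * k)) \<le> A * (pi\<^sup>2 / 6)"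
proof -
  have "(\<Sum>a. \<Sum>b. P a b * weight b ^ (2 * k)) = (\<Sum>b. \<Sum>a. P a b * weight b ^ (2 * k))"
    using rapid_decay_double_series(4)[OF rapid_decay_mult_weight[OF P, of 0 "2 * k"]] by simp
  also have "\<dots> \<le> A * (pi\<^sup>2 / 6)"
    by (rule weighted_row_sums_le[OF rapid_decay_transpose[OF P]]) (rule col)
  finally show ?thesis .
qed

lemma weighted_double_sum_le:
  assumes P: "rapid_decay P" and P0: "\<And>a b. 0 \<le> P a b"
    and col: "\<And>b. weight b ^ (2 * k + 2) * (\<Sum>a. P a b) \<le> A"
    and row: "\<And>a. weight a ^ (2 * k + 2) * (\<Sum>b. P a b) \<le> B"
  shows "(\<Sum>a. \<Sum>b. P a b * weight a ^ k * weight b ^ k) \<le> pi\<^sup>2 / 6 * sqrt (A * B)"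
proof -
  define f where "f a b = sqrt (P a b) * weight b ^ k" for a b
  define g where "g a b = sqrt (P a b) * weight a ^ k" for a b
  have f2: "(f a b)\<^sup>2 = P a b * weight b ^ (2 * k)" and g2: "(g a b)\<^sup>2 = P a b * weight a ^ (2 * k)" for a b
    using P0[of a b] by (simp_all add: f_def g_def power_mult_distrib power_mult[symmetric] mult.commute)
  have "rapid_decay (\<lambda>a b. (f a b)\<^sup>2)" "rapid_decay (\<lambda>a b. (g a b)\<^sup>2)"
    using rapid_decay_mult_weight[OF P, of 0 "2 * k"] rapid_decay_mult_weight[OF P, of "2 * k" 0]
    by (simp_all add: f2 g2)
  note Sf = rapid_decay_double_series[OF this(1)] and Sg = rapid_decay_double_series[OF this(2)]
  have F: "(\<Sum>a. \<Sum>b. (f a b)\<^sup>2) \<le> A * (pi\<^sup>2 / 6)"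
    using weighted_column_sums_le[OF P col] by (simp add: f2)
  have G: "(\<Sum>a. \<Sum>b. (g a b)\<^sup>2) \<le> B * (pi\<^sup>2 / 6)"
    using weighted_row_sums_le[OF P row] by (simp add: g2)
  have "f a b * g a b = (sqrt (P a b) * sqrt (P a b)) * (weight a ^ k * weight b ^ k)" for a b
    by (simp add: f_def g_def ac_simps)
  then have "(\<Sum>a. \<Sum>b. P a b * weight a ^ k * weight b ^ k) = (\<Sum>a. \<Sum>b. f a b * g a b)"
    using P0 by (simp add: mult.assoc)
  also have "\<dots> \<le> sqrt (\<Sum>a. \<Sum>b. (f a b)\<^sup>2) * sqrt (\<Sum>a. \<Sum>b. (g a b)\<^sup>2)"
    by (rule suminf2_Cauchy_Schwarz[OF _ _ Sf(1) Sf(3) Sg(1) Sg(3)]) (simp_all add: f_def g_def P0)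
  also have "\<dots> \<le> sqrt (A * (pi\<^sup>2 / 6)) * sqrt (B * (pi\<^sup>2 / 6))"
  proof (rule mult_mono[OF real_sqrt_le_mono[OF F] real_sqrt_le_mono[OF G]])
    have "0 \<le> (\<Sum>a. \<Sum>b. (f a b)\<^sup>2)" "0 \<le> (\<Sum>a. \<Sum>b. (g a b)\<^sup>2)"
      using Sf(1,3) Sg(1,3) by (auto intro!: suminf_nonneg)
    then show "0 \<le> sqrt (A * (pi\<^sup>2 / 6))" "0 \<le> sqrt (\<Sum>a. \<Sum>b. (g a b)\<^sup>2)"
      using F by simp_all
  qed
  also have "\<dots> = sqrt (pi\<^sup>2 / 6) * sqrt (pi\<^sup>2 / 6) * sqrt (A * B)"
    by (simp only: real_sqrt_mult ac_simps)
  also have "\<dots> = pi\<^sup>2 / 6 * sqrt (A * B)"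
    by simp
  finally show ?thesis .
qed

lemma sum_weighted_hs_sq_le:
  assumes J: "finite J" and x: "\<And>j. j \<in> J \<Longrightarrow> x j \<in> Schwartz"
  shows "(\<Sum>j\<in>J. weighted_hs_sq n (x j))
    \<le> pi\<^sup>2 / 6 * sqrt (opnorm (2 * n + 1) (opsum (\<lambda>j. sprod (adj (x j)) (x j)) J)
                    * opnorm (2 * n + 1) (opsum (\<lambda>j. sprod (x j) (adj (x j))) J))"
proof -
  define p where "p j = (\<lambda>a b. (cmod (x j (unit_seq b) a))\<^sup>2)" for j
  define P where "P = (\<lambda>a b. \<Sum>j\<in>J. p j a b)"
  have p: "rapid_decay (p j)" if "j \<in> J" for j
    unfolding p_def using x[OF that] by (rule rapid_decay_entries_sq)
  have P: "rapid_decay P"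
    unfolding P_def using J p by (rule rapid_decay_sum)
  note pw = rapid_decay_double_series[OF rapid_decay_mult_weight[OF p, where k="2 * n" and l="2 * n"]]
  have "(\<Sum>j\<in>J. weighted_hs_sq n (x j)) = (\<Sum>j\<in>J. \<Sum>a. \<Sum>b. p j a b * weight a ^ (2 * n) * weight b ^ (2 * n))"
    by (simp add: weighted_hs_sq_def p_def)
  also have "\<dots> = (\<Sum>a. \<Sum>b. P a b * weight a ^ (2 * n) * weight b ^ (2 * n))"
    using pw by (simp add: P_def suminf_sum sum_distrib_right)
  also have "\<dots> \<le> pi\<^sup>2 / 6 * sqrt (opnorm (2 * n + 1) (opsum (\<lambda>j. sprod (adj (x j)) (x j)) J)
                    * opnorm (2 * n + 1) (opsum (\<lambda>j. sprod (x j) (adj (x j))) J))"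
  proof (rule weighted_double_sum_le[OF P])
    show "0 \<le> P a b" for a b
      by (simp add: P_def p_def sum_nonneg)
    show "weight b ^ (2 * (2 * n) + 2) * (\<Sum>a. P a b) \<le> opnorm (2 * n + 1) (opsum (\<lambda>j. sprod (adj (x j)) (x j)) J)" for b
      using column_sums_le_opnorm[OF J x, where b=b and k="2 * n + 1"] rapid_decay_double_series(2)[OF p]
      by (simp add: P_def p_def suminf_sum)
    show "weight a ^ (2 * (2 * n) + 2) * (\<Sum>b. P a b) \<le> opnorm (2 * n + 1) (opsum (\<lambda>j. sprod (x j) (adj (x j))) J)" for a
      using row_sums_le_opnorm[OF J x, where a=a and k="2 * n + 1"] rapid_decay_double_series(1)[OF p]
      by (simp add: P_def p_def suminf_sum)
  qed
  finally show ?thesis .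
qed

lemma weighted_hs_sq_nonneg:
  assumes "x \<in> Schwartz"
  shows "0 \<le> weighted_hs_sq n x"
proof -
  note S = rapid_decay_double_series[OF rapid_decay_mult_weight[OF rapid_decay_entries_sq[OF assms]]]
  show ?thesis
    unfolding weighted_hs_sq_def using S(1,3) by (intro suminf_nonneg) (simp_all add: suminf_nonneg)
qed

lemma sum_opnorm_mult_le:
  assumes x: "\<And>j. j \<in> J \<Longrightarrow> x j \<in> Schwartz" and y: "\<And>j. j \<in> J \<Longrightarrow> y j \<in> Schwartz"
  shows "(\<Sum>j\<in>J. opnorm n (x j) * opnorm n (y j))
    \<le> sqrt (\<Sum>j\<in>J. weighted_hs_sq n (x j)) * sqrt (\<Sum>j\<in>J. weighted_hs_sq n (y j))"
proof -
  have "(\<Sum>j\<in>J. opnorm n (x j) * opnorm n (y j))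
      \<le> (\<Sum>j\<in>J. sqrt (weighted_hs_sq n (x j)) * sqrt (weighted_hs_sq n (y j)))"
    using x y by (intro sum_mono mult_mono opnorm_le_sqrt_weighted_hs_sq)
      (auto intro: opnorm_nonneg weighted_hs_sq_nonneg)
  also have "\<dots> \<le> sqrt ((\<Sum>j\<in>J. (sqrt (weighted_hs_sq n (x j)))\<^sup>2) * (\<Sum>j\<in>J. (sqrt (weighted_hs_sq n (y j)))\<^sup>2))"
    by (rule real_le_rsqrt[OF Cauchy_Schwarz_ineq_sum])
  also have "\<dots> = sqrt (\<Sum>j\<in>J. weighted_hs_sq n (x j)) * sqrt (\<Sum>j\<in>J. weighted_hs_sq n (y j))"
    using x y by (simp add: real_sqrt_mult weighted_hs_sq_nonneg)
  finally show ?thesis .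
qed

lemma sqrt_mult_sqrt_eq_powr:
  fixes c a b a' b' :: real
  assumes "0 \<le> c" "0 \<le> a" "0 \<le> b" "0 \<le> a'" "0 \<le> b'"
  shows "sqrt (c * sqrt (a * b)) * sqrt (c * sqrt (a' * b'))
    = c * a powr (1/4) * b powr (1/4) * a' powr (1/4) * b' powr (1/4)"
proof -
  have q: "sqrt (sqrt t) = t powr (1/4)" if "0 \<le> t" for t :: real
    using that by (simp add: powr_half_sqrt[symmetric] powr_powr)
  show ?thesis
    using assms by (simp add: real_sqrt_mult q ac_simps)
qed

theorem proposition2p2:
  fixes n m :: nat and x y :: "nat \<Rightarrow> op"
  assumes "n \<ge> 1" and "m \<ge> 1"
    and "\<forall>j\<in>{1..m}. x j \<in> Schwartz" and "\<forall>j\<in>{1..m}. y j \<in> Schwartz"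
  shows "(\<Sum>j=1..m. opnorm n (x j) * opnorm n (y j))
    \<le> pi\<^sup>2 / 6
      * opnorm (2*n+1) (opsum (\<lambda>j. sprod (adj (x j)) (x j)) {1..m}) powr (1/4)
      * opnorm (2*n+1) (opsum (\<lambda>j. sprod (x j) (adj (x j))) {1..m}) powr (1/4)
      * opnorm (2*n+1) (opsum (\<lambda>j. sprod (adj (y j)) (y j)) {1..m}) powr (1/4)
      * opnorm (2*n+1) (opsum (\<lambda>j. sprod (y j) (adj (y j))) {1..m}) powr (1/4)"
proof -
  define J where "J = {1..m}"
  have J: "finite J" and x: "\<And>j. j \<in> J \<Longrightarrow> x j \<in> Schwartz" and y: "\<And>j. j \<in> J \<Longrightarrow> y j \<in> Schwartz"
    using assms(3,4) by (simp_all add: J_def)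
  define A1 B1 A2 B2 where
    "A1 = opnorm (2*n+1) (opsum (\<lambda>j. sprod (adj (x j)) (x j)) J)"
    "B1 = opnorm (2*n+1) (opsum (\<lambda>j. sprod (x j) (adj (x j))) J)"
    "A2 = opnorm (2*n+1) (opsum (\<lambda>j. sprod (adj (y j)) (y j)) J)"
    "B2 = opnorm (2*n+1) (opsum (\<lambda>j. sprod (y j) (adj (y j))) J)"
  have nonneg: "0 \<le> A1" "0 \<le> B1" "0 \<le> A2" "0 \<le> B2"
    unfolding A1_B1_A2_B2_def using J x y
    by (auto intro!: opnorm_nonneg Schwartz_opsum Schwartz_sprod adj_Schwartz)
  have "(\<Sum>j\<in>J. opnorm n (x j) * opnorm n (y j))
      \<le> sqrt (\<Sum>j\<in>J. weighted_hs_sq n (x j)) * sqrt (\<Sum>j\<in>J. weighted_hs_sq n (y j))"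
    by (rule sum_opnorm_mult_le[OF x y])
  also have "\<dots> \<le> sqrt (pi\<^sup>2 / 6 * sqrt (A1 * B1)) * sqrt (pi\<^sup>2 / 6 * sqrt (A2 * B2))"
    using sum_weighted_hs_sq_le[OF J x, where n=n] sum_weighted_hs_sq_le[OF J y, where n=n] nonneg y
    by (intro mult_mono real_sqrt_le_mono)
      (simp_all add: A1_B1_A2_B2_def sum_nonneg weighted_hs_sq_nonneg)
  also have "\<dots> = pi\<^sup>2 / 6 * A1 powr (1/4) * B1 powr (1/4) * A2 powr (1/4) * B2 powr (1/4)"
    using nonneg by (intro sqrt_mult_sqrt_eq_powr) simp_all
  finally show ?thesis
    by (simp only: J_def A1_B1_A2_B2_def)
qed

end
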